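(* Let $I\subset\mathbb R$ be a bounded closed non-degenerate interval, $\xi=\frac12(\min I+\max I)$, and $f:I\to\mathbb R$ measurable. If for some $a,b,c\in\mathbb R$ one has $|f(x)-(ax+b)|\le c|x-\xi|$ for all $x\in I$, then $f\in L^\infty(I)$ and $|\tau_r^f-f(\xi)|\le\frac12c\,\lambda(I)$ for every $r>1$.
   Context: $\lambda$ is Lebesgue measure. For $h\in L^r(I)$ with $r>1$, $\tau_r^h$ denotes the unique real number minimizing $t\mapsto\|h-t\|_{L^r(I)}$. *)

theory Defs
  imports "HOL-Analysis.Analysis"
begin

definition Lr_norm :: "real set \<Rightarrow> real \<Rightarrow> (real \<Rightarrow> real) \<Rightarrow> real" where
  "Lr_norm I r h = (\<integral>x\<in>I. \<bar>h x\<bar> powr r \<partial>lebesgue) powr (1 / r)"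

definition in_Linf :: "real set \<Rightarrow> (real \<Rightarrow> real) \<Rightarrow> bool" where
  "in_Linf I h \<longleftrightarrow> h \<in> borel_measurable (restrict_space lebesgue I)
      \<and> (\<exists>M. AE x in lebesgue. x \<in> I \<longrightarrow> \<bar>h x\<bar> \<le> M)"

definition tau :: "real set \<Rightarrow> real \<Rightarrow> (real \<Rightarrow> real) \<Rightarrow> real" where
  "tau I r h = (THE t. \<forall>s. Lr_norm I r (\<lambda>x. h x - t) \<le> Lr_norm I r (\<lambda>x. h x - s))"

end

theory Submission
  imports Defs
begin

text \<open>
  For bounded measurable \<open>f\<close> the function \<open>\<phi>(t) = \<integral>\<^sub>I \<bar>f - t\<bar>\<^sup>r\<close> is continuous, coercive and,
  since \<open>r > 1\<close>, strictly convex; its unique minimiser is \<open>\<tau>\<^sub>r\<^sup>f\<close>. Pairing \<open>x\<close> with its mirror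
  image \<open>lo + hi - x\<close> gives \<open>2\<phi>(t) = \<integral>\<^sub>I (\<bar>f x - t\<bar>\<^sup>r + \<bar>f (lo + hi - x) - t\<bar>\<^sup>r)\<close>, and
  \<open>t \<mapsto> \<bar>A - t\<bar>\<^sup>r + \<bar>B - t\<bar>\<^sup>r\<close> increases to the right of \<open>(A + B)/2\<close> and decreases to its left.
  The hypothesis forces \<open>f \<xi> = a\<xi> + b\<close> and puts every \<open>(f x + f (lo + hi - x))/2\<close> within
  \<open>c\<lambda>(I)/2\<close> of \<open>f \<xi>\<close>, so \<open>\<phi>\<close> is monotone outside that window and the minimiser lies in it.
\<close>

lemma convex_comb_powr_le:
  fixes r x y u :: real
  assumes r: "1 \<le> r" and "0 \<le> x" "0 \<le> y" and u: "0 \<le> u" "u \<le> 1"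
  shows "(u * x + (1 - u) * y) powr r \<le> u * x powr r + (1 - u) * y powr r"
proof (cases "x = 0 \<or> y = 0")
  case True
  have scale: "(v * z) powr r \<le> v * z powr r" if "0 \<le> v" "v \<le> 1" "0 \<le> z" for v z :: real
  proof -
    have "(v * z) powr r = v powr r * z powr r" using that by (simp add: powr_mult)
    also have "\<dots> \<le> v powr 1 * z powr r" using that r by (intro mult_right_mono powr_mono') auto
    finally show ?thesis using that by simp
  qed
  show ?thesis using True scale[of u x] scale[of "1 - u" y] assms by auto
next
  case False
  then have "0 < x" "0 < y" using assms by auto
  then show ?thesis
    using convex_onD[OF powr_convex[OF r], of "1 - u" x y] assms by (simp add: algebra_simps)
qed

lemma convex_on_abs_powr:
  fixes r :: real
  assumes r: "1 \<le> r"
  shows "convex_on UNIV (\<lambda>x. \<bar>x\<bar> powr r)"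
proof (rule convex_onI)
  fix u x y :: real assume u: "0 < u" "u < 1"
  have "\<bar>(1 - u) * x + u * y\<bar> \<le> (1 - u) * \<bar>x\<bar> + (1 - (1 - u)) * \<bar>y\<bar>"
    using u abs_triangle_ineq[of "(1 - u) * x" "u * y"] by (simp add: abs_mult)
  then have "\<bar>(1 - u) * x + u * y\<bar> powr r \<le> ((1 - u) * \<bar>x\<bar> + (1 - (1 - u)) * \<bar>y\<bar>) powr r"
    using r by (intro powr_mono2) auto
  also have "\<dots> \<le> (1 - u) * \<bar>x\<bar> powr r + (1 - (1 - u)) * \<bar>y\<bar> powr r"
    using u by (intro convex_comb_powr_le r) auto
  finally show "\<bar>(1 - u) *\<^sub>R x + u *\<^sub>R y\<bar> powr r \<le> (1 - u) * \<bar>x\<bar> powr r + u * \<bar>y\<bar> powr r"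
    by simp
qed simp

lemma midpoint_powr_less:
  fixes r x y :: real
  assumes r: "1 < r" and x: "0 \<le> x" and xy: "x < y"
  shows "((x + y) / 2) powr r < (x powr r + y powr r) / 2"
proof -
  define m where "m = (x + y) / 2"
  have xm: "x < m" and my: "m < y" using xy by (auto simp: m_def)
  have deriv: "((\<lambda>z. z powr r) has_real_derivative r * z powr (r - 1)) (at z)" if "0 < z" for z
    using that by (rule has_real_derivative_powr)
  have mvt: "\<exists>z\<in>{p<..<q}. q powr r - p powr r = (q - p) * (r * z powr (r - 1))"
    if "0 \<le> p" "p < q" for p q :: real
  proof -
    have "continuous_on {p..q} (\<lambda>z. z powr r)"
      using r \<open>0 \<le> p\<close> by (intro continuous_on_powr') auto
    moreover have "(\<lambda>z. z powr r) differentiable (at z)" if "p < z" for z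
      using deriv[of z] that \<open>0 \<le> p\<close> real_differentiable_def by force
    ultimately obtain l z where "p < z" "z < q" "((\<lambda>z. z powr r) has_real_derivative l) (at z)"
        "q powr r - p powr r = (q - p) * l"
      using MVT[OF \<open>p < q\<close>] by blast
    moreover have "l = r * z powr (r - 1)"
      using DERIV_unique[OF calculation(3) deriv] \<open>0 \<le> p\<close> \<open>p < z\<close> by simp
    ultimately show ?thesis by auto
  qed
  obtain z1 where z1: "x < z1" "z1 < m" "m powr r - x powr r = (m - x) * (r * z1 powr (r - 1))"
    using mvt[OF x xm] by auto
  obtain z2 where z2: "m < z2" "z2 < y" "y powr r - m powr r = (y - m) * (r * z2 powr (r - 1))"
    using mvt[OF _ my] x xm by auto
  have "z1 powr (r - 1) < z2 powr (r - 1)"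
    using z1 z2 x r by (intro powr_less_mono2) auto
  then have "(m - x) * (r * z1 powr (r - 1)) < (m - x) * (r * z2 powr (r - 1))"
    using r xm by simp
  moreover have "y - m = m - x" by (simp add: m_def field_simps)
  ultimately have "m powr r - x powr r < y powr r - m powr r"
    using z1(3) z2(3) by simp
  then show ?thesis by (simp add: m_def)
qed

lemma abs_midpoint_powr_less:
  fixes r p q :: real
  assumes r: "1 < r" and "p \<noteq> q"
  shows "\<bar>(p + q) / 2\<bar> powr r < (\<bar>p\<bar> powr r + \<bar>q\<bar> powr r) / 2"
proof (cases "\<bar>p\<bar> = \<bar>q\<bar>")
  case True
  then have "q = -p" "p \<noteq> 0" using \<open>p \<noteq> q\<close> by auto
  then show ?thesis by simp
next
  case False
  have "\<bar>(p + q) / 2\<bar> powr r \<le> ((\<bar>p\<bar> + \<bar>q\<bar>) / 2) powr r"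
    using r by (intro powr_mono2) auto
  also have "\<dots> < (\<bar>p\<bar> powr r + \<bar>q\<bar> powr r) / 2"
    using False midpoint_powr_less[OF r, of "\<bar>p\<bar>" "\<bar>q\<bar>"] midpoint_powr_less[OF r, of "\<bar>q\<bar>" "\<bar>p\<bar>"]
    by (cases "\<bar>p\<bar> < \<bar>q\<bar>") (auto simp: add.commute)
  finally show ?thesis .
qed

lemma powr_dist_pair_mono_above:
  fixes r A B s t :: real
  assumes r: "1 \<le> r" and mid: "A + B \<le> 2 * s" and "s \<le> t"
  shows "\<bar>A - s\<bar> powr r + \<bar>B - s\<bar> powr r \<le> \<bar>A - t\<bar> powr r + \<bar>B - t\<bar> powr r"
proof (cases "s = t")
  case False
  text \<open>\<open>s\<close> lies between \<open>t\<close> and its mirror image \<open>w\<close> in \<open>(A + B)/2\<close>, and the two-point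
    function takes the same value at \<open>t\<close> and \<open>w\<close>.\<close>
  define w where "w = A + B - t"
  have "w < t" using mid \<open>s \<le> t\<close> False by (simp add: w_def)
  define u where "u = (s - w) / (t - w)"
  have u: "0 \<le> u" "u \<le> 1" using \<open>w < t\<close> \<open>s \<le> t\<close> mid by (auto simp: u_def w_def field_simps)
  have "u * (t - w) = s - w" using \<open>w < t\<close> by (simp add: u_def)
  then have s: "s = u * t + (1 - u) * w" by (simp add: algebra_simps)
  have convex: "\<bar>v * p + (1 - v) * q\<bar> powr r \<le> v * \<bar>p\<bar> powr r + (1 - v) * \<bar>q\<bar> powr r"
    if "0 \<le> v" "v \<le> 1" for v p q :: real
    using convex_onD[OF convex_on_abs_powr[OF r], of "1 - v" p q] that by simp
  have "A - s = u * (A - t) + (1 - u) * (A - w)" "\<bar>A - w\<bar> = \<bar>B - t\<bar>"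
    "B - s = u * (B - t) + (1 - u) * (B - w)" "\<bar>B - w\<bar> = \<bar>A - t\<bar>"
    using s by (auto simp: w_def algebra_simps)
  then have "\<bar>A - s\<bar> powr r \<le> u * \<bar>A - t\<bar> powr r + (1 - u) * \<bar>B - t\<bar> powr r"
    and "\<bar>B - s\<bar> powr r \<le> u * \<bar>B - t\<bar> powr r + (1 - u) * \<bar>A - t\<bar> powr r"
    using convex[OF u, of "A - t" "A - w"] convex[OF u, of "B - t" "B - w"] by simp_all
  then show ?thesis by (simp add: algebra_simps)
qed simp

lemma powr_dist_pair_mono_below:
  fixes r A B s t :: real
  assumes "1 \<le> r" and "2 * s \<le> A + B" and "t \<le> s"
  shows "\<bar>A - s\<bar> powr r + \<bar>B - s\<bar> powr r \<le> \<bar>A - t\<bar> powr r + \<bar>B - t\<bar> powr r"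
  using powr_dist_pair_mono_above[of r "-A" "-B" "-s" "-t"] assms by (simp add: abs_minus_commute)

lemma has_integral_reflect_Icc:
  fixes F :: "real \<Rightarrow> real"
  assumes "(F has_integral i) {lo..hi}"
  shows "((\<lambda>x. F (lo + hi - x)) has_integral i) {lo..hi}"
  using has_integral_affinity[of F i lo hi "-1" "lo + hi"] assms by simp

lemma measure_lebesgue_Icc: "lo \<le> hi \<Longrightarrow> measure lebesgue {lo..hi::real} = hi - lo"
  by (subst lmeasure_integral) auto

lemma has_integral_pos_Icc:
  fixes D :: "real \<Rightarrow> real"
  assumes D: "(D has_integral i) {lo..hi}" and pos: "\<And>x. x \<in> {lo..hi} \<Longrightarrow> 0 < D x"
    and "lo < hi"
  shows "0 < i"
proof -
  have "D absolutely_integrable_on {lo..hi}"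
    using D pos by (intro nonnegative_absolutely_integrable_1) (auto intro: less_imp_le)
  then have "integrable (lebesgue_on {lo..hi}) D"
    by (simp add: absolutely_integrable_on_def integrable_restrict_space set_integrable_def)
  then have "integral\<^sup>L (lebesgue_on {lo..hi}) D = integral {lo..hi} D"
    by (rule lebesgue_integral_eq_integral) simp
  then have eq: "integral\<^sup>L (lebesgue_on {lo..hi}) D = i"
    using integral_unique[OF D] by simp
  have "integral\<^sup>L (lebesgue_on {lo..hi}) D \<noteq> 0"
  proof
    assume "integral\<^sup>L (lebesgue_on {lo..hi}) D = 0"
    then have "AE x in lebesgue_on {lo..hi}. D x = 0"
      using integral_nonneg_eq_0_iff_AE[OF \<open>integrable _ D\<close>] pos
      by (simp add: AE_restrict_space_iff less_imp_le)
    then have "AE x in lebesgue. x \<in> {lo..hi} \<longrightarrow> D x = 0"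
      by (simp add: AE_restrict_space_iff)
    then have "AE x in lebesgue. x \<notin> {lo..hi}"
      by (rule AE_mp, intro AE_I2) (use pos in force)
    then have "{lo..hi} \<in> null_sets lebesgue" by (simp add: AE_iff_null_sets)
    then show False
      using \<open>lo < hi\<close> measure_lebesgue_Icc[of lo hi] by (simp add: null_sets_def measure_def)
  qed
  moreover have "0 \<le> i"
    using pos by (intro has_integral_nonneg[OF D]) (auto intro: less_imp_le)
  ultimately show ?thesis using eq by simp
qed

lemma powr_mono2_iff:
  fixes a u v :: real
  assumes "0 \<le> u" "0 \<le> v" "0 < a"
  shows "u powr a \<le> v powr a \<longleftrightarrow> u \<le> v"
  using assms by (meson not_le less_imp_le powr_less_mono2 powr_mono2)

definition powr_deviation :: "real set \<Rightarrow> real \<Rightarrow> (real \<Rightarrow> real) \<Rightarrow> real \<Rightarrow> real" where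
  "powr_deviation I r f t = integral I (\<lambda>x. \<bar>f x - t\<bar> powr r)"

context
  fixes lo hi K r :: real and f :: "real \<Rightarrow> real"
  assumes lo_less_hi: "lo < hi" and r_gt_1: "1 < r"
    and f_meas: "f \<in> borel_measurable (lebesgue_on {lo..hi})"
    and f_bounded: "\<And>x. x \<in> {lo..hi} \<Longrightarrow> \<bar>f x\<bar> \<le> K"
begin

lemma integrable_powr_dist: "(\<lambda>x. \<bar>f x - t\<bar> powr r) integrable_on {lo..hi}"
proof (rule measurable_bounded_by_integrable_imp_integrable_real)
  show "(\<lambda>x. \<bar>f x - t\<bar> powr r) \<in> borel_measurable (lebesgue_on {lo..hi})"
    using f_meas by measurable
  show "\<bar>\<bar>f x - t\<bar> powr r\<bar> \<le> (K + \<bar>t\<bar>) powr r" if "x \<in> {lo..hi}" for x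
    using f_bounded[OF that] r_gt_1 by (simp add: powr_mono2)
qed auto

lemma has_integral_powr_dist:
  "((\<lambda>x. \<bar>f x - t\<bar> powr r) has_integral powr_deviation {lo..hi} r f t) {lo..hi}"
  unfolding powr_deviation_def using integrable_powr_dist by (rule integrable_integral)

lemma powr_deviation_nonneg: "0 \<le> powr_deviation {lo..hi} r f t"
  unfolding powr_deviation_def using integrable_powr_dist by (rule integral_nonneg) simp

lemma Lr_norm_eq_powr_deviation:
  "Lr_norm {lo..hi} r (\<lambda>x. f x - t) = powr_deviation {lo..hi} r f t powr (1 / r)"
proof -
  have "(\<lambda>x. \<bar>f x - t\<bar> powr r) absolutely_integrable_on {lo..hi}"
    using integrable_powr_dist by (rule nonnegative_absolutely_integrable_1) simp
  then have "set_integrable lebesgue {lo..hi} (\<lambda>x. \<bar>f x - t\<bar> powr r)"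
    by (simp add: absolutely_integrable_on_def)
  then show ?thesis
    unfolding Lr_norm_def powr_deviation_def by (simp add: set_lebesgue_integral_eq_integral(2))
qed

lemma tau_eq_The_minimizer:
  "tau {lo..hi} r f =
    (THE t. \<forall>s. powr_deviation {lo..hi} r f t \<le> powr_deviation {lo..hi} r f s)"
  unfolding tau_def Lr_norm_eq_powr_deviation
  using powr_mono2_iff[OF powr_deviation_nonneg powr_deviation_nonneg] r_gt_1 by simp

lemma convex_on_powr_deviation: "convex_on UNIV (powr_deviation {lo..hi} r f)"
proof (rule convex_onI)
  fix u t s :: real assume u: "0 < u" "u < 1"
  show "powr_deviation {lo..hi} r f ((1 - u) *\<^sub>R t + u *\<^sub>R s)
      \<le> (1 - u) * powr_deviation {lo..hi} r f t + u * powr_deviation {lo..hi} r f s"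
    using has_integral_powr_dist
      has_integral_add[OF has_integral_mult_right has_integral_mult_right, OF has_integral_powr_dist
        has_integral_powr_dist]
  proof (rule has_integral_le)
    fix x
    have "f x - ((1 - u) *\<^sub>R t + u *\<^sub>R s) = (1 - u) *\<^sub>R (f x - t) + u *\<^sub>R (f x - s)"
      by (simp add: algebra_simps)
    then show "\<bar>f x - ((1 - u) *\<^sub>R t + u *\<^sub>R s)\<bar> powr r
        \<le> (1 - u) * \<bar>f x - t\<bar> powr r + u * \<bar>f x - s\<bar> powr r"
      using convex_onD[OF convex_on_abs_powr, of r u "f x - t" "f x - s"] r_gt_1 u by simp
  qed
qed simp

lemma powr_deviation_midpoint_less:
  assumes "t \<noteq> s"
  shows "powr_deviation {lo..hi} r f ((t + s) / 2)
    < (powr_deviation {lo..hi} r f t + powr_deviation {lo..hi} r f s) / 2"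
proof -
  have "0 < (powr_deviation {lo..hi} r f t + powr_deviation {lo..hi} r f s) / 2
      - powr_deviation {lo..hi} r f ((t + s) / 2)"
    using has_integral_diff[OF has_integral_divide[where c = 2,
          OF has_integral_add[OF has_integral_powr_dist[of t] has_integral_powr_dist[of s]]]
        has_integral_powr_dist[of "(t + s) / 2"]]
  proof (rule has_integral_pos_Icc[OF _ _ lo_less_hi])
    show "0 < (\<bar>f x - t\<bar> powr r + \<bar>f x - s\<bar> powr r) / 2 - \<bar>f x - (t + s) / 2\<bar> powr r" for x
      using abs_midpoint_powr_less[OF r_gt_1, of "f x - t" "f x - s"] assms
      by (simp add: field_simps)
  qed
  then show ?thesis by simp
qed

lemma powr_deviation_has_minimizer:
  "\<exists>t. \<forall>s. powr_deviation {lo..hi} r f t \<le> powr_deviation {lo..hi} r f s"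
proof -
  let ?\<phi> = "powr_deviation {lo..hi} r f"
  have K: "0 \<le> K" using f_bounded[of lo] lo_less_hi by auto
  text \<open>Outside \<open>[-2K, 2K]\<close> the integrand is at least \<open>K\<^sup>r\<close>, its bound at \<open>t = 0\<close>, so the
    minimum over the compact interval \<open>[-2K, 2K]\<close> is global.\<close>
  have outside: "?\<phi> 0 \<le> ?\<phi> s" if "2 * K < \<bar>s\<bar>" for s
  proof -
    have "?\<phi> 0 \<le> integral {lo..hi} (\<lambda>x. K powr r)"
      unfolding powr_deviation_def using f_bounded r_gt_1
      by (intro integral_le integrable_powr_dist) (auto intro!: powr_mono2)
    also have "\<dots> \<le> ?\<phi> s"
      unfolding powr_deviation_def
    proof (rule integral_le)
      show "K powr r \<le> \<bar>f x - s\<bar> powr r" if "x \<in> {lo..hi}" for x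
        using f_bounded[OF that] \<open>2 * K < \<bar>s\<bar>\<close> K r_gt_1 by (intro powr_mono2) auto
    qed (auto intro: integrable_powr_dist)
    finally show ?thesis .
  qed
  have "continuous_on {-2 * K..2 * K} ?\<phi>"
    using convex_on_continuous[OF open_UNIV convex_on_powr_deviation] continuous_on_subset by blast
  then obtain t where t: "t \<in> {-2 * K..2 * K}" "\<And>s. s \<in> {-2 * K..2 * K} \<Longrightarrow> ?\<phi> t \<le> ?\<phi> s"
    using continuous_attains_inf[of "{-2 * K..2 * K}" ?\<phi>] K by auto
  have "?\<phi> t \<le> ?\<phi> 0" using t(2) K by simp
  have "?\<phi> t \<le> ?\<phi> s" for s
  proof (cases "s \<in> {-2 * K..2 * K}")
    case False
    then have "2 * K < \<bar>s\<bar>" by auto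
    then show ?thesis using \<open>?\<phi> t \<le> ?\<phi> 0\<close> outside[of s] by linarith
  qed (rule t(2))
  then show ?thesis by blast
qed

lemma powr_deviation_minimizer_unique:
  assumes "\<forall>s. powr_deviation {lo..hi} r f t \<le> powr_deviation {lo..hi} r f s"
    and "\<forall>s. powr_deviation {lo..hi} r f t' \<le> powr_deviation {lo..hi} r f s"
  shows "t = t'"
proof (rule ccontr)
  assume "t \<noteq> t'"
  then have "powr_deviation {lo..hi} r f ((t + t') / 2)
      < (powr_deviation {lo..hi} r f t + powr_deviation {lo..hi} r f t') / 2"
    by (rule powr_deviation_midpoint_less)
  moreover have "powr_deviation {lo..hi} r f t \<le> powr_deviation {lo..hi} r f ((t + t') / 2)"
    and "powr_deviation {lo..hi} r f t' \<le> powr_deviation {lo..hi} r f ((t + t') / 2)"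
    using assms by blast+
  ultimately show False by (simp add: field_simps)
qed

lemma tau_eq_iff_minimizer:
  "tau {lo..hi} r f = t \<longleftrightarrow> (\<forall>s. powr_deviation {lo..hi} r f t \<le> powr_deviation {lo..hi} r f s)"
proof -
  define P where "P t \<longleftrightarrow> (\<forall>s. powr_deviation {lo..hi} r f t \<le> powr_deviation {lo..hi} r f s)" for t
  have ex1: "\<exists>!t. P t"
    unfolding P_def
    by (rule ex_ex1I[OF powr_deviation_has_minimizer powr_deviation_minimizer_unique])
  have "(THE t. P t) = t \<longleftrightarrow> P t"
  proof
    assume "(THE t. P t) = t"
    with theI'[OF ex1] show "P t" by simp
  qed (rule the1_equality[OF ex1])
  then show ?thesis by (simp add: tau_eq_The_minimizer P_def)
qed

lemma has_integral_powr_dist_reflect: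
  "((\<lambda>x. \<bar>f x - t\<bar> powr r + \<bar>f (lo + hi - x) - t\<bar> powr r)
    has_integral 2 * powr_deviation {lo..hi} r f t) {lo..hi}"
proof -
  from has_integral_add[OF has_integral_powr_dist[of t]
      has_integral_reflect_Icc[OF has_integral_powr_dist[of t]]]
  show ?thesis by (simp only: mult_2)
qed

lemma powr_deviation_mono_above:
  assumes "\<And>x. x \<in> {lo..hi} \<Longrightarrow> f x + f (lo + hi - x) \<le> 2 * m" and "m \<le> s" "s \<le> t"
  shows "powr_deviation {lo..hi} r f s \<le> powr_deviation {lo..hi} r f t"
proof -
  have "2 * powr_deviation {lo..hi} r f s \<le> 2 * powr_deviation {lo..hi} r f t"
    using has_integral_powr_dist_reflect has_integral_powr_dist_reflect
  proof (rule has_integral_le)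
    show "\<bar>f x - s\<bar> powr r + \<bar>f (lo + hi - x) - s\<bar> powr r
        \<le> \<bar>f x - t\<bar> powr r + \<bar>f (lo + hi - x) - t\<bar> powr r" if "x \<in> {lo..hi}" for x
      using assms(1)[OF that] assms(2,3) r_gt_1 by (intro powr_dist_pair_mono_above) auto
  qed
  then show ?thesis by simp
qed

lemma powr_deviation_mono_below:
  assumes "\<And>x. x \<in> {lo..hi} \<Longrightarrow> 2 * m \<le> f x + f (lo + hi - x)" and "s \<le> m" "t \<le> s"
  shows "powr_deviation {lo..hi} r f s \<le> powr_deviation {lo..hi} r f t"
proof -
  have "2 * powr_deviation {lo..hi} r f s \<le> 2 * powr_deviation {lo..hi} r f t"
    using has_integral_powr_dist_reflect has_integral_powr_dist_reflect
  proof (rule has_integral_le)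
    show "\<bar>f x - s\<bar> powr r + \<bar>f (lo + hi - x) - s\<bar> powr r
        \<le> \<bar>f x - t\<bar> powr r + \<bar>f (lo + hi - x) - t\<bar> powr r" if "x \<in> {lo..hi}" for x
      using assms(1)[OF that] assms(2,3) r_gt_1 by (intro powr_dist_pair_mono_below) auto
  qed
  then show ?thesis by simp
qed

lemma abs_tau_diff_le:
  assumes sym: "\<And>x. x \<in> {lo..hi} \<Longrightarrow> \<bar>f x + f (lo + hi - x) - 2 * m\<bar> \<le> 2 * M"
  shows "\<bar>tau {lo..hi} r f - m\<bar> \<le> M"
proof -
  let ?\<phi> = "powr_deviation {lo..hi} r f"
  define T where "T = tau {lo..hi} r f"
  have min: "?\<phi> T \<le> ?\<phi> s" for s using tau_eq_iff_minimizer[of T] by (simp add: T_def)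
  have is_tau: "t = T" if "?\<phi> t \<le> ?\<phi> T" for t
  proof -
    have "?\<phi> t \<le> ?\<phi> s" for s using order_trans[OF that min] .
    then show ?thesis using tau_eq_iff_minimizer[of t] by (simp add: T_def)
  qed
  have above: "f x + f (lo + hi - x) \<le> 2 * (m + M)" if "x \<in> {lo..hi}" for x
    using sym[OF that] by (simp add: abs_le_iff)
  have below: "2 * (m - M) \<le> f x + f (lo + hi - x)" if "x \<in> {lo..hi}" for x
    using sym[OF that] by (simp add: abs_le_iff)
  have "T \<le> m + M"
  proof (rule ccontr)
    assume "\<not> T \<le> m + M"
    have "?\<phi> (m + M) \<le> ?\<phi> T"
      by (rule powr_deviation_mono_above[OF above]) (use \<open>\<not> T \<le> m + M\<close> in simp_all)
    then show False using is_tau[of "m + M"] \<open>\<not> T \<le> m + M\<close> by simp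
  qed
  moreover have "m - M \<le> T"
  proof (rule ccontr)
    assume "\<not> m - M \<le> T"
    have "?\<phi> (m - M) \<le> ?\<phi> T"
      by (rule powr_deviation_mono_below[OF below]) (use \<open>\<not> m - M \<le> T\<close> in simp_all)
    then show False using is_tau[of "m - M"] \<open>\<not> m - M \<le> T\<close> by simp
  qed
  ultimately show ?thesis unfolding T_def by linarith
qed

end

lemma abs_sub_midpoint_le: "x \<in> {lo..hi} \<Longrightarrow> \<bar>x - (lo + hi) / 2\<bar> \<le> (hi - lo) / 2"
  for x lo hi :: real
  unfolding abs_le_iff by (simp add: field_simps)

lemma midpoint_reflection_sum_bound:
  fixes lo hi a b c :: real and f :: "real \<Rightarrow> real"
  assumes "lo < hi"
    and approx: "\<forall>x\<in>{lo..hi}. \<bar>f x - (a * x + b)\<bar> \<le> c * \<bar>x - (lo + hi) / 2\<bar>"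
    and x: "x \<in> {lo..hi}"
  shows "\<bar>f x + f (lo + hi - x) - 2 * f ((lo + hi) / 2)\<bar> \<le> c * (hi - lo)"
proof -
  define \<xi> where "\<xi> = (lo + hi) / 2"
  have "\<xi> \<in> {lo..hi}" using \<open>lo < hi\<close> by (simp add: \<xi>_def)
  then have "\<bar>f \<xi> - (a * \<xi> + b)\<bar> \<le> c * \<bar>\<xi> - (lo + hi) / 2\<bar>" using approx by blast
  then have f\<xi>: "f \<xi> = a * \<xi> + b" by (simp add: \<xi>_def)
  have "lo \<in> {lo..hi}" using \<open>lo < hi\<close> by simp
  then have "0 \<le> c * \<bar>lo - \<xi>\<bar>"
    using order_trans[OF abs_ge_zero] approx by (fastforce simp: \<xi>_def)
  moreover have "0 < \<bar>lo - \<xi>\<bar>" using \<open>lo < hi\<close> by (simp add: \<xi>_def)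
  ultimately have "0 \<le> c" by (simp add: zero_le_mult_iff)
  have err: "\<bar>f y - (a * y + b)\<bar> \<le> c * (hi - lo) / 2" if "y \<in> {lo..hi}" for y
  proof -
    have "\<bar>y - \<xi>\<bar> \<le> (hi - lo) / 2" using abs_sub_midpoint_le[OF that] by (simp add: \<xi>_def)
    then have "c * \<bar>y - \<xi>\<bar> \<le> c * (hi - lo) / 2"
      using mult_left_mono[of "\<bar>y - \<xi>\<bar>" "(hi - lo) / 2" c] \<open>0 \<le> c\<close> by simp
    then show ?thesis using approx that by (force simp: \<xi>_def)
  qed
  have "2 * f \<xi> = (a * x + b) + (a * (lo + hi - x) + b)"
    unfolding f\<xi> by (simp add: \<xi>_def algebra_simps)
  then have "f x + f (lo + hi - x) - 2 * f \<xi>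
      = (f x - (a * x + b)) + (f (lo + hi - x) - (a * (lo + hi - x) + b))"
    by simp
  also have "\<bar>\<dots>\<bar> \<le> c * (hi - lo) / 2 + c * (hi - lo) / 2"
    using x by (intro order_trans[OF abs_triangle_ineq] add_mono err) auto
  finally show ?thesis by (simp add: \<xi>_def)
qed

theorem proposition4:
  fixes lo hi a b c :: real and f :: "real \<Rightarrow> real"
  assumes "lo < hi"
    and "f \<in> borel_measurable (restrict_space lebesgue {lo..hi})"
    and "\<forall>x\<in>{lo..hi}. \<bar>f x - (a * x + b)\<bar> \<le> c * \<bar>x - (lo + hi) / 2\<bar>"
  shows "in_Linf {lo..hi} f \<and>
    (\<forall>r>1. \<bar>tau {lo..hi} r f - f ((lo + hi) / 2)\<bar> \<le> 1/2 * c * measure lebesgue {lo..hi})"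
proof -
  define K where "K = \<bar>a\<bar> * (\<bar>lo\<bar> + \<bar>hi\<bar>) + \<bar>b\<bar> + \<bar>c\<bar> * (hi - lo) / 2"
  have bounded: "\<bar>f x\<bar> \<le> K" if x: "x \<in> {lo..hi}" for x
  proof -
    have "\<bar>a * x\<bar> \<le> \<bar>a\<bar> * (\<bar>lo\<bar> + \<bar>hi\<bar>)" using x by (auto simp: abs_mult intro!: mult_left_mono)
    moreover have "c * \<bar>x - (lo + hi) / 2\<bar> \<le> \<bar>c\<bar> * (hi - lo) / 2"
      using mult_mono[OF abs_ge_self[of c] abs_sub_midpoint_le[OF x]] by simp
    moreover have "\<bar>f x - (a * x + b)\<bar> \<le> c * \<bar>x - (lo + hi) / 2\<bar>" using assms(3) x by blast
    ultimately show ?thesis unfolding K_def by linarith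
  qed
  then have Linf: "in_Linf {lo..hi} f"
    unfolding in_Linf_def using assms(2) by (auto intro!: exI[of _ K])
  have sym: "\<bar>f x + f (lo + hi - x) - 2 * f ((lo + hi) / 2)\<bar>
      \<le> 2 * (1/2 * c * measure lebesgue {lo..hi})" if "x \<in> {lo..hi}" for x
    using midpoint_reflection_sum_bound[OF assms(1,3) that] measure_lebesgue_Icc[of lo hi] assms(1)
    by simp
  have "\<forall>r>1. \<bar>tau {lo..hi} r f - f ((lo + hi) / 2)\<bar> \<le> 1/2 * c * measure lebesgue {lo..hi}"
    using abs_tau_diff_le[where m = "f ((lo + hi) / 2)" and M = "1/2 * c * measure lebesgue {lo..hi}",
        OF assms(1) _ assms(2) bounded sym] by blast
  with Linf show ?thesis ..
qed

end
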